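(* Let $k,n$ be positive integers with $k\leqslant n$ and let $Y\subseteq\mathrm{Conf}_k([n])$ be an order ideal with respect to the Bruhat order. Then every linear extension of $Y$ is a flag shelling order.
   Context: $[n]:=\{1,\ldots,n\}$. $[n]^i_<$ denotes the set of $i$-element subsets of $[n]$, identified with increasing $i$-tuples; its Bruhat order is $u\leqslant v$ iff $u_j\leqslant v_j$ for all $j\in[i]$. $\mathrm{Conf}_k([n])$ is the set of $k$-tuples $(a_1,\ldots,a_k)$ of pairwise distinct elements of $[n]$. For $x\in\mathrm{Conf}_k([n])$ and $i\in[k]$, $P^{(i)}(x)\in[n]^i_<$ is the increasing rearrangement of $\{x_1,\ldots,x_i\}$. The Bruhat order on $\mathrm{Conf}_k([n])$ is $x\leqslant y$ iff $P^{(i)}(x)\leqslant P^{(i)}(y)$ for all $i\in[k]$. An order ideal is a subset $Y$ with $y\in Y$, $x\leqslant y$ implying $x\in Y$. A linear extension of $Y$ is a tuple $(L_1,\ldots,L_h)$ listing each element of $Y$ exactly once such that $L_i<L_j$ implies $i<j$. For $y\in\mathrm{Conf}_k([n])$ let $P(y):=\{P^{(1)}(y),\ldots,P^{(k)}(y)\}$ (a $k$-element set whose elements are subsets of $[n]$). A sequence $(F_1,\ldots,F_h)$ of distinct $k$-element sets is a shelling order if for all $i<j$ there exists $z<j$ with $|F_z\cap F_j|=|F_j|-1$ and $F_i\cap F_j\subseteq F_z\cap F_j$. A tuple $(a_1,\ldots,a_h)$ listing the elements of $Y$ is a flag shelling order for $Y$ if $(P(a_1),\ldots,P(a_h))$ is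 a shelling order (of the simplicial complex with facets $\{P(y):y\in Y\}$). *)

theory Defs
  imports Main
begin

definition conf :: "nat \<Rightarrow> nat \<Rightarrow> nat list set" where
  "conf k n = {x. length x = k \<and> distinct x \<and> set x \<subseteq> {1..n}}"

definition subset_bruhat_le :: "nat \<Rightarrow> nat set \<Rightarrow> nat set \<Rightarrow> bool" where
  "subset_bruhat_le i u v \<longleftrightarrow>
     (\<forall>j<i. sorted_list_of_set u ! j \<le> sorted_list_of_set v ! j)"

definition Pi :: "nat \<Rightarrow> nat list \<Rightarrow> nat set" where
  "Pi i x = set (take i x)"

definition conf_le :: "nat \<Rightarrow> nat list \<Rightarrow> nat list \<Rightarrow> bool" where
  "conf_le k x y \<longleftrightarrow> (\<forall>i\<in>{1..k}. subset_bruhat_le i (Pi i x) (Pi i y))"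

definition conf_less :: "nat \<Rightarrow> nat list \<Rightarrow> nat list \<Rightarrow> bool" where
  "conf_less k x y \<longleftrightarrow> conf_le k x y \<and> x \<noteq> y"

definition order_ideal :: "nat \<Rightarrow> nat \<Rightarrow> nat list set \<Rightarrow> bool" where
  "order_ideal k n Y \<longleftrightarrow> Y \<subseteq> conf k n \<and>
     (\<forall>y\<in>Y. \<forall>x\<in>conf k n. conf_le k x y \<longrightarrow> x \<in> Y)"

definition linear_extension :: "nat \<Rightarrow> nat list set \<Rightarrow> nat list list \<Rightarrow> bool" where
  "linear_extension k Y L \<longleftrightarrow> distinct L \<and> set L = Y \<and>
     (\<forall>i<length L. \<forall>j<length L. conf_less k (L ! i) (L ! j) \<longrightarrow> i < j)"

definition Pflag :: "nat \<Rightarrow> nat list \<Rightarrow> nat set set" where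
  "Pflag k y = {Pi i y | i. i \<in> {1..k}}"

definition shelling_order :: "nat \<Rightarrow> 'a set list \<Rightarrow> bool" where
  "shelling_order k F \<longleftrightarrow> distinct F \<and> (\<forall>G\<in>set F. finite G \<and> card G = k) \<and>
     (\<forall>j<length F. \<forall>i<j. \<exists>z<j.
        card (F ! z \<inter> F ! j) = card (F ! j) - 1 \<and> F ! i \<inter> F ! j \<subseteq> F ! z \<inter> F ! j)"

definition flag_shelling_order :: "nat \<Rightarrow> nat list set \<Rightarrow> nat list list \<Rightarrow> bool" where
  "flag_shelling_order k Y a \<longleftrightarrow> distinct a \<and> set a = Y \<and>
     shelling_order k (map (Pflag k) a)"

end

theory Submission
  imports Defs
begin

text \<open>Let x = L_i and y = L_j with i < j, so y is not below x. Then there is a level m with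
  P^(m)(x) \<noteq> P^(m)(y) at which y can be lowered: some y' < y has the same flag as y except at
  level m, obtained either by swapping a descent y_m > y_(m+1) or (for m = k) by replacing y_k
  with a smaller value not occurring in y. If no such move existed, then y_m < y_(m+1) at every
  level m < k where x and y differ, and y would leave no gaps below y_k if P^(k)(x) \<noteq> P^(k)(y);
  at every level m the elements of P^(m)(y) - P^(m)(x) would then be at most y_m and those of
  P^(m)(x) - P^(m)(y) larger than y_m, which forces y \<le> x. Since Y is an order ideal, y' occurs
  before y in L, and P(y') \<inter> P(y) = P(y) - {P^(m)(y)} has k - 1 elements and contains
  P(x) \<inter> P(y).\<close>

lemma card_atMost_le_if_separated:
  fixes u v :: "nat set"
  assumes fin: "finite u" "finite v" and card_eq: "card u = card v"
    and sep: "\<forall>e\<in>u - v. \<forall>d\<in>v - u. e < d"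
  shows "card {e\<in>v. e \<le> t} \<le> card {e\<in>u. e \<le> t}"
proof (cases "\<exists>d\<in>v - u. d \<le> t")
  case True
  then obtain d where d: "d \<in> v - u" "d \<le> t" by blast
  define common where "common = {e\<in>u \<inter> v. e \<le> t}"
  have "u - v \<subseteq> {e. e \<le> t}"
    using sep d by (auto dest!: bspec intro: less_imp_le order_trans)
  then have u_split: "{e\<in>u. e \<le> t} = common \<union> (u - v)"
    unfolding common_def by blast
  have "card {e\<in>v. e \<le> t} \<le> card (common \<union> (v - u))"
    using fin by (intro card_mono) (auto simp: common_def)
  also have "\<dots> \<le> card common + card (v - u)" by (rule card_Un_le)
  also have "card (v - u) = card (u - v)"
    using fin card_eq by (simp add: card_Diff_subset_Int Int_commute)
  also have "card common + card (u - v) = card {e\<in>u. e \<le> t}"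
    unfolding u_split using fin by (subst card_Un_disjoint) (auto simp: common_def)
  finally show ?thesis .
next
  case False
  then have "{e\<in>v. e \<le> t} \<subseteq> {e\<in>u. e \<le> t}" by blast
  then show ?thesis using fin by (intro card_mono) auto
qed

lemma subset_bruhat_le_if_card_atMost_le:
  fixes u v :: "nat set"
  assumes fin: "finite u" "finite v" and "card u = i" "card v = i"
    and card_le: "\<And>t. card {e\<in>v. e \<le> t} \<le> card {e\<in>u. e \<le> t}"
  shows "subset_bruhat_le i u v"
  unfolding subset_bruhat_le_def
proof (intro allI impI)
  fix j assume j: "j < i"
  define su sv where "su = sorted_list_of_set u" and "sv = sorted_list_of_set v"
  have su: "sorted_wrt (<) su" "set su = u" "length su = i"
    and sv: "sorted_wrt (<) sv" "set sv = v" "length sv = i"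
    using fin \<open>card u = i\<close> \<open>card v = i\<close> by (auto simp: su_def sv_def)
  show "su ! j \<le> sv ! j"
  proof (rule ccontr)
    assume "\<not> su ! j \<le> sv ! j"
    have "{e\<in>u. e \<le> sv ! j} \<subseteq> set (take j su)"
    proof
      fix e assume "e \<in> {e\<in>u. e \<le> sv ! j}"
      then obtain p where "p < i" "e = su ! p" "e \<le> sv ! j"
        using su by (auto simp: in_set_conv_nth)
      moreover have "\<not> j \<le> p"
        using \<open>\<not> su ! j \<le> sv ! j\<close> calculation su sorted_wrt_nth_less
        by (metis le_neq_implies_less order.strict_trans1 less_imp_le)
      ultimately show "e \<in> set (take j su)"
        using su by (auto simp: in_set_conv_nth)
    qed
    then have "card {e\<in>u. e \<le> sv ! j} \<le> j"
      using card_mono[OF finite_set] card_length[of "take j su"] by fastforce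
    moreover have "set (take (Suc j) sv) \<subseteq> {e\<in>v. e \<le> sv ! j}"
    proof
      fix e assume "e \<in> set (take (Suc j) sv)"
      then obtain p where "p \<le> j" "e = sv ! p"
        using sv j by (auto simp: in_set_conv_nth less_Suc_eq_le)
      then show "e \<in> {e\<in>v. e \<le> sv ! j}"
        using sv j sorted_wrt_nth_less[of "(<)" sv p j] by (cases "p = j") auto
    qed
    then have "Suc j \<le> card {e\<in>v. e \<le> sv ! j}"
      using sv j fin card_mono[of "{e\<in>v. e \<le> sv ! j}" "set (take (Suc j) sv)"]
      by (simp add: distinct_card sorted_wrt_take strict_sorted_iff)
    ultimately show False using card_le[of "sv ! j"] by simp
  qed
qed

lemma subset_bruhat_le_if_separated:
  fixes u v :: "nat set"
  assumes "finite u" "finite v" "card u = i" "card v = i"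
    and "\<forall>e\<in>u - v. \<forall>d\<in>v - u. e < d"
  shows "subset_bruhat_le i u v"
  using assms by (intro subset_bruhat_le_if_card_atMost_le card_atMost_le_if_separated) auto

lemma conf_D:
  assumes "x \<in> conf k n" shows "length x = k" "distinct x" "set x \<subseteq> {1..n}"
  using assms unfolding conf_def by simp_all

lemma Pi_Suc: "p < length y \<Longrightarrow> Pi (Suc p) y = insert (y ! p) (Pi p y)"
  unfolding Pi_def by (simp add: take_Suc_conv_app_nth)

lemma Pi_mono: "a \<le> b \<Longrightarrow> Pi a y \<subseteq> Pi b y"
  unfolding Pi_def by (rule set_take_subset_set_take)

lemma Pi_subset_set: "Pi q y \<subseteq> set y"
  unfolding Pi_def by (rule set_take_subset)

lemma finite_Pi [simp]: "finite (Pi q y)"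
  unfolding Pi_def by simp

lemma mem_Pi_iff: "e \<in> Pi q y \<longleftrightarrow> (\<exists>p<min q (length y). e = y ! p)"
  unfolding Pi_def by (auto simp: in_set_conv_nth)

lemma nth_mem_Pi_iff: "distinct y \<Longrightarrow> p < length y \<Longrightarrow> y ! p \<in> Pi q y \<longleftrightarrow> p < q"
  by (auto simp: mem_Pi_iff nth_eq_iff_index_eq)

lemma card_Pi: "distinct y \<Longrightarrow> q \<le> length y \<Longrightarrow> card (Pi q y) = q"
  unfolding Pi_def by (simp add: distinct_card)

lemma eq_if_Pi_eq:
  assumes x: "x \<in> conf k n" and y: "y \<in> conf k n"
    and eq: "\<forall>i\<in>{1..k}. Pi i x = Pi i y"
  shows "x = y"
proof (rule nth_equalityI)
  show "length x = length y" using conf_D(1)[OF x] conf_D(1)[OF y] by simp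
  fix p assume p: "p < length x"
  have len: "length x = k" "length y = k" using conf_D(1)[OF x] conf_D(1)[OF y] by simp_all
  have "Pi q x = Pi q y" if "q \<le> k" for q
    using eq that by (cases q) (auto simp: Pi_def)
  then have "Pi p x = Pi p y" "Pi (Suc p) x = Pi (Suc p) y"
    using p len by auto
  moreover have "x ! p \<notin> Pi p x" "y ! p \<notin> Pi p y"
    using conf_D(2)[OF x] conf_D(2)[OF y] p len by (simp_all add: nth_mem_Pi_iff)
  ultimately show "x ! p = y ! p"
    using Pi_Suc[of p x] Pi_Suc[of p y] p len by auto
qed

definition lower_at_level :: "nat \<Rightarrow> nat \<Rightarrow> nat \<Rightarrow> nat list \<Rightarrow> nat list \<Rightarrow> bool" where
  "lower_at_level k n m y' y \<longleftrightarrow> m \<in> {1..k} \<and> y' \<in> conf k n \<and> conf_less k y' y \<and>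
     (\<forall>q\<le>k. q \<noteq> m \<longrightarrow> Pi q y' = Pi q y)"

lemma lower_at_level_if_nth_less:
  assumes y: "y \<in> conf k n" and y': "y' \<in> conf k n" and p: "p < k"
    and same: "\<And>q. q \<le> k \<Longrightarrow> q \<noteq> Suc p \<Longrightarrow> Pi q y' = Pi q y"
    and less: "y' ! p < y ! p"
  shows "lower_at_level k n (Suc p) y' y"
proof -
  have len: "length y = k" "length y' = k" "distinct y" "distinct y'"
    using conf_D[OF y] conf_D[OF y'] by simp_all
  have "subset_bruhat_le q (Pi q y') (Pi q y)" if q: "q \<in> {1..k}" for q
  proof (cases "q = Suc p")
    case False
    then show ?thesis using same q by (simp add: subset_bruhat_le_def)
  next
    case True
    have "Pi q y' = insert (y' ! p) (Pi p y)" "Pi q y = insert (y ! p) (Pi p y)"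
      using True Pi_Suc[of p y'] Pi_Suc[of p y] same[of p] p len by auto
    then show ?thesis
      using less q len card_Pi[of y' q] card_Pi[of y q]
      by (intro subset_bruhat_le_if_separated) auto
  qed
  moreover have "y' \<noteq> y" using less by auto
  ultimately show ?thesis
    using y' p same unfolding lower_at_level_def conf_less_def conf_le_def by auto
qed

lemma lower_at_level_swap:
  assumes y: "y \<in> conf k n" and p: "Suc p < k" and desc: "y ! Suc p < y ! p"
  shows "lower_at_level k n (Suc p) (y[p := y ! Suc p, Suc p := y ! p]) y"
proof (rule lower_at_level_if_nth_less[OF y])
  let ?y' = "y[p := y ! Suc p, Suc p := y ! p]"
  have len: "length y = k" using conf_D(1)[OF y] .
  show "?y' \<in> conf k n" using y p len by (simp add: conf_def)
  show "Pi q ?y' = Pi q y" if "q \<le> k" "q \<noteq> Suc p" for q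
  proof (cases "q \<le> p")
    case True
    then show ?thesis by (simp add: Pi_def take_update_swap list_update_beyond)
  next
    case False
    then have "Suc p < q" using that by simp
    then show ?thesis
      using set_swap[of p "take q y" "Suc p"] \<open>q \<le> k\<close> len by (simp add: Pi_def take_update_swap)
  qed
  show "?y' ! p < y ! p" using p len desc by simp
qed (use p in simp)

lemma lower_at_level_replace_last:
  assumes y: "y \<in> conf k n" and k: "0 < k"
    and v: "1 \<le> v" "v < y ! (k - 1)" "v \<notin> set y"
  shows "lower_at_level k n k (y[k - 1 := v]) y"
proof -
  have len: "length y = k" and y_set: "set y \<subseteq> {1..n}" using conf_D[OF y] by auto
  have "y ! (k - 1) \<in> set y" using len k by simp
  then have "y ! (k - 1) \<le> n" using y_set by auto
  then have "set (y[k - 1 := v]) \<subseteq> {1..n}"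
    using y_set v set_update_subset_insert[of y "k - 1" v] by auto
  then have "y[k - 1 := v] \<in> conf k n"
    using y v by (simp add: conf_def distinct_list_update)
  moreover have "Pi q (y[k - 1 := v]) = Pi q y" if "q \<le> k" "q \<noteq> k" for q
    using that by (simp add: Pi_def)
  ultimately have "lower_at_level k n (Suc (k - 1)) (y[k - 1 := v]) y"
    using k len v by (intro lower_at_level_if_nth_less[OF y]) auto
  then show ?thesis using k by simp
qed

lemma nth_less_if_ascending:
  fixes y :: "nat list"
  assumes ascent: "\<And>q. lo \<le> q \<Longrightarrow> q < hi \<Longrightarrow> y ! q < y ! Suc q" and "lo < hi"
  shows "y ! lo < y ! hi"
  using Suc_leI[OF \<open>lo < hi\<close>]
proof (induction hi rule: dec_induct)
  case base
  then show ?case using ascent \<open>lo < hi\<close> by simp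
next
  case (step q)
  then show ?case using ascent[of q] \<open>lo < hi\<close> by simp
qed

lemma le_nth_if_in_Pi_diff:
  assumes y: "distinct y" "m \<le> length y"
    and ascent: "\<And>q. Suc q < length y \<Longrightarrow> Pi (Suc q) x \<noteq> Pi (Suc q) y \<Longrightarrow> y ! q < y ! Suc q"
    and e: "e \<in> Pi m y - Pi m x"
  shows "e \<le> y ! (m - 1)"
proof -
  obtain p where p: "p < m" "e = y ! p" using e y by (auto simp: mem_Pi_iff)
  have ascending: "y ! q < y ! Suc q" if "p \<le> q" "Suc q < m" for q
  proof (rule ascent)
    show "Suc q < length y" using that y by simp
    have "e \<in> Pi (Suc q) y" using p that y by (simp add: nth_mem_Pi_iff)
    moreover have "e \<notin> Pi (Suc q) x" using e Pi_mono[of "Suc q" m x] that by auto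
    ultimately show "Pi (Suc q) x \<noteq> Pi (Suc q) y" by blast
  qed
  show ?thesis
  proof (cases "p = m - 1")
    case False
    then have "p < m - 1" using p by linarith
    then show ?thesis using p ascending nth_less_if_ascending[of p "m - 1" y] by fastforce
  qed (use p in simp)
qed

lemma nth_less_if_in_Pi_diff:
  assumes x: "x \<in> conf k n" and y: "y \<in> conf k n" and m: "m \<in> {1..k}"
    and ascent: "\<And>q. Suc q < k \<Longrightarrow> Pi (Suc q) x \<noteq> Pi (Suc q) y \<Longrightarrow> y ! q < y ! Suc q"
    and gapless: "Pi k x \<noteq> Pi k y \<Longrightarrow> {1..<y ! (k - 1)} \<subseteq> set y"
    and d: "d \<in> Pi m x - Pi m y"
  shows "y ! (m - 1) < d"
proof -
  note len = conf_D[OF y]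
  have ascent_below: "y ! (m - 1) < y ! s" if "m \<le> s" "s < k" "\<forall>q<s. d \<notin> Pi (Suc q) y" for s
  proof (rule nth_less_if_ascending)
    fix q assume q: "m - 1 \<le> q" "q < s"
    have "m \<le> Suc q" using q by linarith
    then have "d \<in> Pi (Suc q) x" using d Pi_mono[of m "Suc q" x] by blast
    then show "y ! q < y ! Suc q" using ascent[of q] q that by auto
  qed (use m that in auto)
  show ?thesis
  proof (cases "d \<in> set y")
    case True
    then obtain s where s: "s < k" "d = y ! s" using len by (auto simp: in_set_conv_nth)
    then have "m \<le> s" using d len by (auto simp: nth_mem_Pi_iff)
    moreover have "\<forall>q<s. d \<notin> Pi (Suc q) y" using s len by (auto simp: nth_mem_Pi_iff)
    ultimately show ?thesis using ascent_below s by simp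
  next
    case False
    then have not_in_y: "\<forall>q. d \<notin> Pi q y" using Pi_subset_set by blast
    have "y ! (m - 1) \<le> y ! (k - 1)"
    proof (cases "m = k")
      case False
      then have "m \<le> k - 1" using m by auto
      then show ?thesis using ascent_below[of "k - 1"] not_in_y m by simp
    qed simp
    moreover have "d \<in> Pi k x" using d Pi_mono[of m k x] m by auto
    then have "d \<notin> {1..<y ! (k - 1)}" using gapless not_in_y False by blast
    moreover have "1 \<le> d" using \<open>d \<in> Pi k x\<close> Pi_subset_set conf_D(3)[OF x] by fastforce
    moreover have "y ! (k - 1) \<in> set y" using len m by simp
    ultimately show ?thesis using False by (cases "d = y ! (k - 1)") auto
  qed
qed

text \<open>The two hypotheses say that neither lowering move (swapping a descent, replacing the
  last entry) is available at a level where x and y differ; list indices are 0-based.\<close>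

lemma conf_le_if_locally_minimal:
  assumes x: "x \<in> conf k n" and y: "y \<in> conf k n"
    and ascent: "\<And>q. Suc q < k \<Longrightarrow> Pi (Suc q) x \<noteq> Pi (Suc q) y \<Longrightarrow> y ! q < y ! Suc q"
    and gapless: "Pi k x \<noteq> Pi k y \<Longrightarrow> {1..<y ! (k - 1)} \<subseteq> set y"
  shows "conf_le k y x"
  unfolding conf_le_def
proof
  fix m assume m: "m \<in> {1..k}"
  note len = conf_D[OF x] conf_D[OF y]
  show "subset_bruhat_le m (Pi m y) (Pi m x)"
  proof (rule subset_bruhat_le_if_separated)
    show "card (Pi m y) = m" "card (Pi m x) = m" using m len by (simp_all add: card_Pi)
    show "\<forall>e\<in>Pi m y - Pi m x. \<forall>d\<in>Pi m x - Pi m y. e < d"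
    proof (intro ballI)
      fix e d assume e: "e \<in> Pi m y - Pi m x" and d: "d \<in> Pi m x - Pi m y"
      have "e \<le> y ! (m - 1)"
        by (rule le_nth_if_in_Pi_diff[where x = x]) (use m len ascent e in auto)
      also have "\<dots> < d" by (rule nth_less_if_in_Pi_diff[OF x y m ascent gapless d])
      finally show "e < d" .
    qed
  qed simp_all
qed

lemma exists_lower_at_differing_level:
  assumes x: "x \<in> conf k n" and y: "y \<in> conf k n" and k: "0 < k"
    and not_le: "\<not> conf_le k y x"
  shows "\<exists>m y'. Pi m x \<noteq> Pi m y \<and> lower_at_level k n m y' y"
proof (rule ccontr)
  assume none: "\<not> ?thesis"
  note len = conf_D[OF y]
  have "y ! q < y ! Suc q" if q: "Suc q < k" "Pi (Suc q) x \<noteq> Pi (Suc q) y" for q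
  proof (rule ccontr)
    assume "\<not> y ! q < y ! Suc q"
    moreover have "y ! q \<noteq> y ! Suc q" using len q by (simp add: nth_eq_iff_index_eq)
    ultimately have "y ! Suc q < y ! q" by simp
    then show False using lower_at_level_swap[OF y q(1)] none q(2) by blast
  qed
  moreover have "{1..<y ! (k - 1)} \<subseteq> set y" if "Pi k x \<noteq> Pi k y"
  proof
    fix v assume "v \<in> {1..<y ! (k - 1)}"
    then show "v \<in> set y"
      using lower_at_level_replace_last[OF y k, of v] none that by auto
  qed
  ultimately show False using conf_le_if_locally_minimal[OF x y] not_le by blast
qed

lemma Pflag_eq_image: "Pflag k y = (\<lambda>i. Pi i y) ` {1..k}"
  unfolding Pflag_def by auto

lemma mem_Pflag_iff:
  assumes x: "x \<in> conf k n" and m: "m \<in> {1..k}" and "card S = m"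
  shows "S \<in> Pflag k x \<longleftrightarrow> S = Pi m x"
proof -
  have "card (Pi i x) = i" if "i \<in> {1..k}" for i
    using that conf_D[OF x] by (simp add: card_Pi)
  then show ?thesis using m \<open>card S = m\<close> by (auto simp: Pflag_eq_image)
qed

lemma card_Pflag:
  assumes y: "y \<in> conf k n" shows "card (Pflag k y) = k"
proof -
  have "inj_on (\<lambda>i. Pi i y) {1..k}"
    using conf_D[OF y] by (intro inj_onI) (metis atLeastAtMost_iff card_Pi)
  then show ?thesis by (simp add: Pflag_eq_image card_image)
qed

lemma inj_on_Pflag: "inj_on (Pflag k) (conf k n)"
proof (rule inj_onI)
  fix x y assume x: "x \<in> conf k n" and y: "y \<in> conf k n" and eq: "Pflag k x = Pflag k y"
  have "Pi i x = Pi i y" if i: "i \<in> {1..k}" for i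
  proof -
    have "Pi i y \<in> Pflag k x" using eq i by (simp add: Pflag_eq_image)
    then show ?thesis using mem_Pflag_iff[OF x i] conf_D[OF y] i by (simp add: card_Pi)
  qed
  then show "x = y" using eq_if_Pi_eq[OF x y] by blast
qed

lemma Pflag_Int_lower_at_level:
  assumes low: "lower_at_level k n m y' y" and y: "y \<in> conf k n"
  shows "Pflag k y' \<inter> Pflag k y = Pflag k y - {Pi m y}"
proof -
  have m: "m \<in> {1..k}" and y': "y' \<in> conf k n" and "y' \<noteq> y"
    and same: "\<forall>q\<le>k. q \<noteq> m \<longrightarrow> Pi q y' = Pi q y"
    using low unfolding lower_at_level_def conf_less_def by auto
  have "Pi m y' \<noteq> Pi m y"
  proof
    assume "Pi m y' = Pi m y"
    then have "\<forall>i\<in>{1..k}. Pi i y' = Pi i y" using same by auto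
    then show False using eq_if_Pi_eq[OF y' y] \<open>y' \<noteq> y\<close> by blast
  qed
  moreover have card_Pi_y: "card (Pi i y) = i" if "i \<in> {1..k}" for i
    using that conf_D[OF y] by (simp add: card_Pi)
  ultimately have in_y': "Pi i y \<in> Pflag k y' \<longleftrightarrow> i \<noteq> m" if "i \<in> {1..k}" for i
    using that same mem_Pflag_iff[OF y' that card_Pi_y[OF that]] by auto
  have eq_m: "Pi i y = Pi m y \<longleftrightarrow> i = m" if "i \<in> {1..k}" for i
    using that m card_Pi_y by metis
  show ?thesis
  proof (rule set_eqI)
    fix S
    show "S \<in> Pflag k y' \<inter> Pflag k y \<longleftrightarrow> S \<in> Pflag k y - {Pi m y}"
    proof (cases "S \<in> Pflag k y")
      case True
      then obtain i where "i \<in> {1..k}" "S = Pi i y" by (auto simp: Pflag_eq_image)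
      then show ?thesis using in_y' eq_m by auto
    qed simp
  qed
qed

lemma exists_shelling_predecessor:
  assumes x: "x \<in> conf k n" and y: "y \<in> conf k n" and k: "0 < k"
    and not_le: "\<not> conf_le k y x"
  obtains y' where "y' \<in> conf k n" "conf_less k y' y"
    "card (Pflag k y' \<inter> Pflag k y) = card (Pflag k y) - 1"
    "Pflag k x \<inter> Pflag k y \<subseteq> Pflag k y' \<inter> Pflag k y"
proof -
  obtain m y' where differ: "Pi m x \<noteq> Pi m y" and low: "lower_at_level k n m y' y"
    using exists_lower_at_differing_level[OF x y k not_le] by blast
  have m: "m \<in> {1..k}" and y': "y' \<in> conf k n" "conf_less k y' y"
    using low unfolding lower_at_level_def by auto
  have card_Pi_y: "card (Pi m y) = m" using m conf_D[OF y] by (simp add: card_Pi)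
  have "Pi m y \<in> Pflag k y" using m by (auto simp: Pflag_eq_image)
  then have "card (Pflag k y' \<inter> Pflag k y) = card (Pflag k y) - 1"
    using Pflag_Int_lower_at_level[OF low y] by (simp add: Pflag_eq_image)
  moreover have "Pi m y \<notin> Pflag k x" using mem_Pflag_iff[OF x m card_Pi_y] differ by simp
  then have "Pflag k x \<inter> Pflag k y \<subseteq> Pflag k y' \<inter> Pflag k y"
    using Pflag_Int_lower_at_level[OF low y] by blast
  ultimately show ?thesis using that y' by blast
qed

lemma linear_extension_lower_index:
  assumes lin: "linear_extension k Y L" and ideal: "order_ideal k n Y"
    and j: "j < length L" and y': "y' \<in> conf k n" and less: "conf_less k y' (L ! j)"
  obtains z where "z < j" "L ! z = y'"
proof -
  have "y' \<in> Y"
    using ideal lin j y' less nth_mem[OF j]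
    unfolding order_ideal_def linear_extension_def conf_less_def by blast
  then obtain z where "z < length L" "L ! z = y'"
    using lin unfolding linear_extension_def by (auto simp: in_set_conv_nth)
  then show ?thesis using that lin j less unfolding linear_extension_def by blast
qed

lemma linear_extension_shelling_step:
  assumes k: "0 < k" and ideal: "order_ideal k n Y" and lin: "linear_extension k Y L"
    and j: "j < length L" and i: "i < j"
  obtains z where "z < j"
    "card (Pflag k (L ! z) \<inter> Pflag k (L ! j)) = card (Pflag k (L ! j)) - 1"
    "Pflag k (L ! i) \<inter> Pflag k (L ! j) \<subseteq> Pflag k (L ! z) \<inter> Pflag k (L ! j)"
proof -
  have L: "distinct L" "set L \<subseteq> conf k n"
    and order: "\<forall>a<length L. \<forall>b<length L. conf_less k (L ! a) (L ! b) \<longrightarrow> a < b"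
    using lin ideal unfolding linear_extension_def order_ideal_def by auto
  have "L ! j \<noteq> L ! i" using L(1) i j by (simp add: nth_eq_iff_index_eq)
  then have not_le: "\<not> conf_le k (L ! j) (L ! i)"
    using order[rule_format, of j i] i j by (auto simp: conf_less_def)
  have conf_ij: "L ! i \<in> conf k n" "L ! j \<in> conf k n" using L(2) i j by auto
  obtain y' where y': "y' \<in> conf k n" "conf_less k y' (L ! j)"
    and shelling: "card (Pflag k y' \<inter> Pflag k (L ! j)) = card (Pflag k (L ! j)) - 1"
      "Pflag k (L ! i) \<inter> Pflag k (L ! j) \<subseteq> Pflag k y' \<inter> Pflag k (L ! j)"
    using exists_shelling_predecessor[OF conf_ij k not_le] by blast
  obtain z where "z < j" "L ! z = y'"
    using linear_extension_lower_index[OF lin ideal j y'] by blast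
  then show ?thesis using that shelling by blast
qed

theorem theorem4p5:
  fixes k n :: nat and Y :: "nat list set" and L :: "nat list list"
  assumes "0 < k" and "k \<le> n"
    and "Y \<subseteq> conf k n"
    and "order_ideal k n Y"
    and "linear_extension k Y L"
  shows "flag_shelling_order k Y L"
proof -
  have L: "distinct L" "set L = Y" "set L \<subseteq> conf k n"
    using assms(3,5) unfolding linear_extension_def by auto
  let ?F = "map (Pflag k) L"
  have "distinct ?F"
    using L inj_on_subset[OF inj_on_Pflag L(3)] by (simp add: distinct_map)
  moreover have "\<forall>G\<in>set ?F. finite G \<and> card G = k"
    using L card_Pflag by (auto simp: Pflag_eq_image)
  moreover have "\<exists>z<j. card (?F ! z \<inter> ?F ! j) = card (?F ! j) - 1 \<and> ?F ! i \<inter> ?F ! j \<subseteq> ?F ! z \<inter> ?F ! j"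
    if j: "j < length ?F" and i: "i < j" for i j
  proof -
    have "j < length L" using j by simp
    then obtain z where "z < j"
      "card (Pflag k (L ! z) \<inter> Pflag k (L ! j)) = card (Pflag k (L ! j)) - 1"
      "Pflag k (L ! i) \<inter> Pflag k (L ! j) \<subseteq> Pflag k (L ! z) \<inter> Pflag k (L ! j)"
      by (rule linear_extension_shelling_step[OF assms(1,4,5) _ i])
    then show ?thesis using i j by (intro exI[where x = z]) auto
  qed
  ultimately show ?thesis using L unfolding flag_shelling_order_def shelling_order_def by blast
qed

end
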